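(* Let $\mathcal{P}=\{1,\dots,p\}$ and let $M(1),\dots,M(p)\in\mathbb{R}^{n\times n}$ be exponentially stable (Hurwitz) matrices. Let $\tau_D>0$, $N_0>0$ and $\lambda>0$. Then there exists $g_0>0$ such that for every $g\ge g_0$ there is a constant $c>0$ such that, for every switching signal $\sigma\in\mathcal{S}_{ave}(\tau_D,N_0)$ and every initial condition, the solution of $\dot x=gM(\sigma(t))x$ satisfies $\|x(t)\|\le c\,e^{-\lambda t}\|x(0)\|$ for all $t\ge0$.
   Context: A switching signal is a piecewise-constant, right-continuous map $\sigma:[0,\infty)\to\mathcal{P}$ with finitely many discontinuities on each bounded interval. For $t\ge t_0\ge0$, $N_\sigma(t_0,t)$ is the number of discontinuities of $\sigma$ in the open interval $(t_0,t)$, and $\mathcal{S}_{ave}(\tau_D,N_0)$ is the set of switching signals with $N_\sigma(t_0,t)\le N_0+\frac{t-t_0}{\tau_D}$ for all $t\ge t_0\ge0$. $\|\cdot\|$ is any vector norm (with induced matrix norm). *)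

theory Defs
  imports "HOL-Analysis.Analysis"
begin

definition hurwitz :: "real^'n^'n \<Rightarrow> bool" where
  "hurwitz A \<longleftrightarrow>
     (\<forall>(mu::complex) (v::complex^'n). v \<noteq> 0 \<and>
        (\<chi> i j. complex_of_real (A $ i $ j)) *v v = mu *s v \<longrightarrow> Re mu < 0)"

definition disc_points :: "(real \<Rightarrow> nat) \<Rightarrow> real set" where
  "disc_points \<sigma> = {t. 0 < t \<and> \<not> continuous (at t) \<sigma>}"

text \<open>Switching signal with values in P: right-continuous, piecewise constant
  (nat carries the discrete topology), finitely many discontinuities on bounded intervals.\<close>
definition switching_signal :: "nat set \<Rightarrow> (real \<Rightarrow> nat) \<Rightarrow> bool" where
  "switching_signal P \<sigma> \<longleftrightarrow>
     (\<forall>t\<ge>0. \<sigma> t \<in> P) \<and>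
     (\<forall>t\<ge>0. continuous (at_right t) \<sigma>) \<and>
     (\<forall>T. finite (disc_points \<sigma> \<inter> {0..T}))"

definition N_sigma :: "(real \<Rightarrow> nat) \<Rightarrow> real \<Rightarrow> real \<Rightarrow> nat" where
  "N_sigma \<sigma> t0 t = card (disc_points \<sigma> \<inter> {t0<..<t})"

definition S_ave :: "nat set \<Rightarrow> real \<Rightarrow> real \<Rightarrow> (real \<Rightarrow> nat) set" where
  "S_ave P tauD N0 = {\<sigma>. switching_signal P \<sigma> \<and>
     (\<forall>t0 t. 0 \<le> t0 \<and> t0 \<le> t \<longrightarrow> real (N_sigma \<sigma> t0 t) \<le> N0 + (t - t0) / tauD)}"

definition switched_solution ::
  "real \<Rightarrow> (nat \<Rightarrow> real^'n^'n) \<Rightarrow> (real \<Rightarrow> nat) \<Rightarrow> (real \<Rightarrow> real^'n) \<Rightarrow> bool" where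
  "switched_solution g M \<sigma> x \<longleftrightarrow>
     continuous_on {0..} x \<and>
     (\<forall>t\<ge>0. t \<notin> disc_points \<sigma> \<longrightarrow>
        (x has_vector_derivative (g *\<^sub>R (M (\<sigma> t) *v x t))) (at t within {0..}))"

end

theory Submission
  imports Defs "Jordan_Normal_Form.Spectral_Radius"
begin

text \<open>
  Every Hurwitz mode \<open>M\<close> has a quadratic Lyapunov function \<open>V x = x \<bullet> (P *v x)\<close> with
  \<open>\<parallel>x\<parallel>\<^sup>2 \<le> V x \<le> K \<parallel>x\<parallel>\<^sup>2\<close> and \<open>2 x \<bullet> (P *v (M *v x)) \<le> -\<beta> V x\<close>; for finitely many modes
  \<open>K\<close> and \<open>\<beta>\<close> can be chosen uniformly. Along \<open>x' = g M x\<close> the function \<open>V\<close> then decays like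
  \<open>exp (-g\<beta> t)\<close>, so between two switches \<open>\<parallel>x\<parallel>\<^sup>2\<close> shrinks by the factor \<open>K exp (-g\<beta> \<Delta>t)\<close>.
  Chaining over the at most \<open>N0 + t/\<tau>D\<close> switches in \<open>(0, t)\<close> gives
  \<open>\<parallel>x t\<parallel>\<^sup>2 \<le> K ^ (N0 + 1) exp ((ln K / \<tau>D - g\<beta>) t) \<parallel>x 0\<parallel>\<^sup>2\<close>, and a large gain \<open>g\<close> makes the
  exponent at most \<open>-2\<lambda> t\<close>.

  The matrix \<open>P\<close> is the discrete Lyapunov sum \<open>\<Sum>k. (B\<^sup>k)\<^sup>T B\<^sup>k\<close> for the Euler step
  \<open>B = I + h M\<close>: for small \<open>h > 0\<close> all eigenvalues \<open>1 + h \<mu>\<close> of \<open>B\<close> lie in the open unit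
  disc, so by the Jordan normal form the entries of \<open>B\<^sup>k\<close> decay geometrically.
\<close>

no_notation Matrix.vec_index (infixl "$" 100)
no_notation scalar_prod (infix "\<bullet>" 70)

subsection \<open>Spectral radius of Euler steps\<close>

lemma pow_smult_mat:
  fixes C :: "'a::comm_semiring_1 mat"
  assumes "C \<in> carrier_mat n n"
  shows "(a \<cdot>\<^sub>m C) ^\<^sub>m k = a ^ k \<cdot>\<^sub>m C ^\<^sub>m k"
proof (induction k)
  case 0
  thus ?case using assms by (auto intro!: eq_matI)
next
  case (Suc k)
  have "(a \<cdot>\<^sub>m C) ^\<^sub>m Suc k = (a ^ k \<cdot>\<^sub>m C ^\<^sub>m k) * (a \<cdot>\<^sub>m C)"
    using Suc by simp
  also have "\<dots> = a ^ k \<cdot>\<^sub>m (C ^\<^sub>m k * (a \<cdot>\<^sub>m C))"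
    by (rule mult_smult_assoc_mat) (use assms in auto)
  also have "\<dots> = a ^ k \<cdot>\<^sub>m (a \<cdot>\<^sub>m (C ^\<^sub>m k * C))"
    using assms mult_smult_distrib[of "C ^\<^sub>m k" n n C n a] by simp
  also have "\<dots> = a ^ Suc k \<cdot>\<^sub>m C ^\<^sub>m Suc k"
    by (auto intro!: eq_matI simp: ac_simps)
  finally show ?case .
qed

lemma smult_mat_mult_mat_vec:
  assumes "A \<in> carrier_mat n n" "v \<in> carrier_vec n"
  shows "(a \<cdot>\<^sub>m A) *\<^sub>v v = a \<cdot>\<^sub>v (A *\<^sub>v v)"
  using assms by (intro eq_vecI) (auto simp: scalar_prod_def sum_distrib_left mult.assoc)

lemma eigenvalue_smult_mat:
  fixes A :: "'a::field mat"
  assumes A: "A \<in> carrier_mat n n" and a: "a \<noteq> 0" and ev: "eigenvalue (a \<cdot>\<^sub>m A) \<nu>"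
  shows "eigenvalue A (\<nu> / a)"
proof -
  obtain v where v: "v \<in> carrier_vec n" "v \<noteq> 0\<^sub>v n" "a \<cdot>\<^sub>v (A *\<^sub>v v) = \<nu> \<cdot>\<^sub>v v"
    using ev A unfolding eigenvalue_def eigenvector_def by (auto simp: smult_mat_mult_mat_vec)
  have "A *\<^sub>v v = (1 / a) \<cdot>\<^sub>v (a \<cdot>\<^sub>v (A *\<^sub>v v))"
    using a by (auto simp: smult_smult_assoc)
  also have "\<dots> = (\<nu> / a) \<cdot>\<^sub>v v"
    using v(3) by (auto simp: smult_smult_assoc)
  finally show ?thesis
    using A v unfolding eigenvalue_def eigenvector_def by auto
qed

lemma eigenvalue_one_plus_mat:
  fixes A :: "'a::comm_ring_1 mat"
  assumes A: "A \<in> carrier_mat n n" and ev: "eigenvalue (1\<^sub>m n + A) \<nu>"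
  shows "eigenvalue A (\<nu> - 1)"
proof -
  obtain v where v: "v \<in> carrier_vec n" "v \<noteq> 0\<^sub>v n" "(1\<^sub>m n + A) *\<^sub>v v = \<nu> \<cdot>\<^sub>v v"
    using ev A unfolding eigenvalue_def eigenvector_def by auto
  have eq: "v + A *\<^sub>v v = \<nu> \<cdot>\<^sub>v v"
    using v add_mult_distrib_mat_vec[OF one_carrier_mat A v(1)] by simp
  have "A *\<^sub>v v = (\<nu> - 1) \<cdot>\<^sub>v v"
  proof (rule eq_vecI)
    fix i assume "i < dim_vec ((\<nu> - 1) \<cdot>\<^sub>v v)"
    hence i: "i < n" using v by simp
    have "vec_index (v + A *\<^sub>v v) i = vec_index (\<nu> \<cdot>\<^sub>v v) i" using eq by simp
    thus "vec_index (A *\<^sub>v v) i = vec_index ((\<nu> - 1) \<cdot>\<^sub>v v) i"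
      using i v A by (simp add: algebra_simps)
  qed (use A v in simp)
  thus ?thesis using A v unfolding eigenvalue_def eigenvector_def by auto
qed

lemma spectral_radius_less:
  assumes "A \<in> carrier_mat n n" "n > 0" "\<And>\<nu>. eigenvalue A \<nu> \<Longrightarrow> cmod \<nu> < b"
  shows "spectral_radius A < b"
  using spectral_radius_mem_max(1)[OF assms(1,2)] assms(3) unfolding spectrum_def by auto

lemma cmod_one_plus_mult_less_1:
  assumes "h > 0" "Re \<mu> < 0" "h * (cmod \<mu>)\<^sup>2 \<le> - Re \<mu>"
  shows "cmod (1 + complex_of_real h * \<mu>) < 1"
proof -
  have "(cmod (1 + complex_of_real h * \<mu>))\<^sup>2 = (1 + h * Re \<mu>)\<^sup>2 + (h * Im \<mu>)\<^sup>2"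
    by (simp add: cmod_power2)
  also have "\<dots> = 1 + h * Re \<mu> + h * (Re \<mu> + h * ((Re \<mu>)\<^sup>2 + (Im \<mu>)\<^sup>2))"
    by (simp add: power2_eq_square algebra_simps)
  also have "\<dots> \<le> 1 + h * Re \<mu>"
    using assms by (simp add: cmod_power2 mult_nonneg_nonpos)
  also have "\<dots> < 1"
    using assms by (simp add: mult_pos_neg)
  finally show ?thesis
    by (simp add: power_less_one_iff)
qed

lemma spectral_radius_Euler_step_less_1:
  fixes A :: "complex mat"
  assumes A: "A \<in> carrier_mat n n" and n: "n > 0"
    and ev: "\<And>\<mu>. eigenvalue A \<mu> \<Longrightarrow> Re \<mu> < 0"
  shows "\<exists>h>0. spectral_radius (1\<^sub>m n + complex_of_real h \<cdot>\<^sub>m A) < 1"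
proof -
  have fin: "finite (spectrum A)" using card_finite_spectrum[OF A] by auto
  define h where "h = Min (insert 1 ((\<lambda>\<mu>. - Re \<mu> / (cmod \<mu>)\<^sup>2) ` spectrum A))"
  have "- Re \<mu> / (cmod \<mu>)\<^sup>2 > 0" if "eigenvalue A \<mu>" for \<mu>
    using ev[OF that] by (intro divide_pos_pos) auto
  hence h_pos: "h > 0"
    unfolding h_def using fin by (subst Min_gr_iff) (auto simp: spectrum_def)
  have h_le: "h * (cmod \<mu>)\<^sup>2 \<le> - Re \<mu>" if "eigenvalue A \<mu>" for \<mu>
  proof -
    have "h \<le> - Re \<mu> / (cmod \<mu>)\<^sup>2"
      unfolding h_def using fin that by (intro Min_le) (auto simp: spectrum_def)
    moreover have "\<mu> \<noteq> 0" using ev[OF that] by auto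
    ultimately show ?thesis by (simp add: field_simps)
  qed
  have "spectral_radius (1\<^sub>m n + complex_of_real h \<cdot>\<^sub>m A) < 1"
  proof (rule spectral_radius_less[OF _ n])
    fix \<nu> assume "eigenvalue (1\<^sub>m n + complex_of_real h \<cdot>\<^sub>m A) \<nu>"
    hence "eigenvalue A ((\<nu> - 1) / complex_of_real h)"
      using A h_pos by (intro eigenvalue_smult_mat eigenvalue_one_plus_mat) auto
    moreover have "\<nu> = 1 + complex_of_real h * ((\<nu> - 1) / complex_of_real h)"
      using h_pos by simp
    ultimately show "cmod \<nu> < 1"
      using h_pos ev h_le by (metis cmod_one_plus_mult_less_1)
  qed (use A in simp)
  with h_pos show ?thesis by blast
qed

lemma spectral_radius_less_1_power_decay:
  fixes B :: "complex mat"
  assumes B: "B \<in> carrier_mat n n" and n: "n > 0" and sr: "spectral_radius B < 1"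
  shows "\<exists>r c. 0 < r \<and> r < 1 \<and>
    (\<forall>k i j. i < n \<longrightarrow> j < n \<longrightarrow> cmod ((B ^\<^sub>m k) $$ (i,j)) \<le> c * r ^ k)"
proof -
  define \<rho> where "\<rho> = spectral_radius B"
  have "\<rho> \<ge> 0"
    using spectral_radius_mem_max(1)[OF B n] unfolding \<rho>_def by auto
  define r where "r = (1 + \<rho>) / 2"
  have r: "0 < r" "r < 1" "\<rho> < r"
    using \<open>\<rho> \<ge> 0\<close> sr unfolding r_def \<rho>_def by auto
  txt \<open>The powers of \<open>C = B / r\<close> stay bounded since its spectral radius \<open>\<rho> / r\<close> is below 1.\<close>
  define C where "C = complex_of_real (1 / r) \<cdot>\<^sub>m B"
  have C: "C \<in> carrier_mat n n" using B unfolding C_def by simp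
  have "spectral_radius C < 1"
  proof (rule spectral_radius_less[OF C n])
    fix \<nu> assume "eigenvalue C \<nu>"
    hence "eigenvalue B (complex_of_real r * \<nu>)"
      using eigenvalue_smult_mat[OF B, of "complex_of_real (1 / r)" \<nu>] r
      unfolding C_def by (simp add: field_simps)
    hence "r * cmod \<nu> \<le> \<rho>"
      using spectral_radius_mem_max(2)[OF B n] r
      unfolding \<rho>_def spectrum_def by (force simp: norm_mult)
    hence "r * cmod \<nu> < r * 1" using r by linarith
    thus "cmod \<nu> < 1" using r(1) mult_less_cancel_left_pos by blast
  qed
  then obtain c where c: "\<And>k. norm_bound (C ^\<^sub>m k) c"
    using spectral_radius_jnf_norm_bound_less_1_upper_triangular[OF C] by auto
  have B_eq: "B = complex_of_real r \<cdot>\<^sub>m C"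
    unfolding C_def using r B by (auto intro!: eq_matI)
  have "cmod ((B ^\<^sub>m k) $$ (i,j)) \<le> c * r ^ k" if "i < n" "j < n" for k i j
  proof -
    have "cmod ((B ^\<^sub>m k) $$ (i,j)) = r ^ k * cmod ((C ^\<^sub>m k) $$ (i,j))"
      unfolding B_eq pow_smult_mat[OF C] using that C r by (simp add: norm_mult norm_power)
    also have "\<dots> \<le> r ^ k * c"
      using c[of k] that C r unfolding norm_bound_def by (intro mult_left_mono) auto
    finally show ?thesis by (simp add: mult.commute)
  qed
  with r show ?thesis by blast
qed

subsection \<open>From Cartesian matrices to Jordan normal forms\<close>

text \<open>On \<open>real^'n^'n\<close> the operator \<open>^\<close> is the componentwise power, so matrix powers are explicit.\<close>

fun matpow :: "'a::semiring_1^'n^'n \<Rightarrow> nat \<Rightarrow> 'a^'n^'n" where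
  "matpow A 0 = Finite_Cartesian_Product.mat 1"
| "matpow A (Suc k) = matpow A k ** A"

definition complex_mat_of :: "real^'n^'n \<Rightarrow> complex mat" where
  "complex_mat_of A = Matrix.mat CARD('n) CARD('n)
     (\<lambda>(i, j). complex_of_real (A $ from_nat_into UNIV i $ from_nat_into UNIV j))"

lemma to_nat_on_UNIV_less [simp]: "to_nat_on UNIV (a :: 'n::finite) < CARD('n)"
  using to_nat_on_finite[of "UNIV :: 'n set"] by (auto simp: bij_betw_def)

lemma to_nat_on_from_nat_into_UNIV [simp]:
  "i < CARD('n) \<Longrightarrow> to_nat_on UNIV (from_nat_into UNIV i :: 'n::finite) = i"
  using to_nat_on_finite[of "UNIV :: 'n set"]
  unfolding from_nat_into_def by (auto simp: bij_betw_def f_inv_into_f)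

lemma from_nat_into_UNIV_eq_iff:
  "i < CARD('n) \<Longrightarrow> j < CARD('n) \<Longrightarrow> (from_nat_into UNIV i :: 'n::finite) = from_nat_into UNIV j \<longleftrightarrow> i = j"
  by (metis to_nat_on_from_nat_into_UNIV)

lemma dim_complex_mat_of [simp]:
  "dim_row (complex_mat_of (A :: real^'n^'n)) = CARD('n)"
  "dim_col (complex_mat_of (A :: real^'n^'n)) = CARD('n)"
  unfolding complex_mat_of_def by simp_all

lemma complex_mat_of_carrier [simp]: "complex_mat_of (A :: real^'n^'n) \<in> carrier_mat CARD('n) CARD('n)"
  by (simp add: carrier_matI)

lemma complex_mat_of_matpow:
  fixes A :: "real^'n^'n"
  shows "complex_mat_of (matpow A k) = complex_mat_of A ^\<^sub>m k"
proof (induction k)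
  case 0
  show ?case
    by (rule eq_matI)
      (auto simp: complex_mat_of_def Finite_Cartesian_Product.mat_def from_nat_into_UNIV_eq_iff)
next
  case (Suc k)
  show ?case
  proof (rule eq_matI)
    fix i j assume "i < dim_row (complex_mat_of A ^\<^sub>m Suc k)" "j < dim_col (complex_mat_of A ^\<^sub>m Suc k)"
    hence ij: "i < CARD('n)" "j < CARD('n)" by auto
    have "(complex_mat_of A ^\<^sub>m Suc k) $$ (i, j)
        = (\<Sum>l<CARD('n). complex_mat_of (matpow A k) $$ (i, l) * complex_mat_of A $$ (l, j))"
      using ij by (simp add: Suc scalar_prod_def atLeast0LessThan)
    also have "\<dots> = complex_of_real (\<Sum>l<CARD('n). matpow A k $ from_nat_into UNIV i $ from_nat_into UNIV l
                                          * A $ from_nat_into UNIV l $ from_nat_into UNIV j)"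
      using ij by (simp add: complex_mat_of_def)
    also have "\<dots> = complex_mat_of (matpow A (Suc k)) $$ (i, j)"
      using ij sum.card_from_nat_into[of "\<lambda>b. matpow A k $ from_nat_into UNIV i $ b
                                              * A $ b $ from_nat_into UNIV j" "UNIV :: 'n set"]
      by (simp add: complex_mat_of_def matrix_matrix_mult_def)
    finally show "complex_mat_of (matpow A (Suc k)) $$ (i, j) = (complex_mat_of A ^\<^sub>m Suc k) $$ (i, j)"
      by simp
  qed (simp_all add: complex_mat_of_def)
qed

lemma complex_mat_of_Euler_step:
  "complex_mat_of (Finite_Cartesian_Product.mat 1 + h *\<^sub>R A)
     = 1\<^sub>m CARD('n) + complex_of_real h \<cdot>\<^sub>m complex_mat_of (A :: real^'n^'n)"
  by (rule eq_matI)
    (auto simp: complex_mat_of_def Finite_Cartesian_Product.mat_def from_nat_into_UNIV_eq_iff)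

lemma hurwitz_eigenvalue_complex_mat_of:
  fixes M :: "real^'n^'n"
  assumes H: "hurwitz M" and ev: "eigenvalue (complex_mat_of M) \<mu>"
  shows "Re \<mu> < 0"
proof -
  obtain v where v: "v \<in> carrier_vec CARD('n)" "v \<noteq> 0\<^sub>v CARD('n)" "complex_mat_of M *\<^sub>v v = \<mu> \<cdot>\<^sub>v v"
    using ev unfolding eigenvalue_def eigenvector_def by auto
  define w :: "complex^'n" where "w = (\<chi> a. vec_index v (to_nat_on UNIV a))"
  have "w \<noteq> 0"
  proof
    assume "w = 0"
    hence "vec_index v i = 0" if "i < CARD('n)" for i
      using that Finite_Cartesian_Product.vec_eq_iff[of w 0]
      by (metis to_nat_on_from_nat_into_UNIV vec_lambda_beta w_def zero_index)
    hence "v = 0\<^sub>v CARD('n)" using v(1) by (intro eq_vecI) auto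
    with v(2) show False ..
  qed
  moreover have "(\<chi> a b. complex_of_real (M $ a $ b)) *v w = \<mu> *s w"
  proof (subst Finite_Cartesian_Product.vec_eq_iff, intro allI)
    fix a :: 'n
    have "((\<chi> a b. complex_of_real (M $ a $ b)) *v w) $ a
        = (\<Sum>l<CARD('n). complex_of_real (M $ a $ from_nat_into UNIV l) * w $ from_nat_into UNIV l)"
      using sum.card_from_nat_into[of "\<lambda>b. complex_of_real (M $ a $ b) * w $ b" "UNIV :: 'n set"]
      by (simp add: matrix_vector_mult_def)
    also have "\<dots> = (\<Sum>l<CARD('n). complex_of_real (M $ a $ from_nat_into UNIV l) * vec_index v l)"
      by (intro sum.cong) (simp_all add: w_def)
    also have "\<dots> = vec_index (complex_mat_of M *\<^sub>v v) (to_nat_on UNIV a)"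
      using v(1) by (simp add: complex_mat_of_def scalar_prod_def atLeast0LessThan)
    finally show "((\<chi> a b. complex_of_real (M $ a $ b)) *v w) $ a = (\<mu> *s w) $ a"
      using v by (simp add: w_def)
  qed
  ultimately show ?thesis using H unfolding hurwitz_def by blast
qed

lemma hurwitz_Euler_step_power_decay:
  fixes M :: "real^'n^'n"
  assumes "hurwitz M"
  shows "\<exists>h>0. \<exists>r c. 0 < r \<and> r < 1 \<and>
    (\<forall>k a b. \<bar>matpow (Finite_Cartesian_Product.mat 1 + h *\<^sub>R M) k $ a $ b\<bar> \<le> c * r ^ k)"
proof -
  obtain h where h: "h > 0"
    and sr: "spectral_radius (1\<^sub>m CARD('n) + complex_of_real h \<cdot>\<^sub>m complex_mat_of M) < 1"
    using spectral_radius_Euler_step_less_1[OF complex_mat_of_carrier zero_less_card_finite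
        hurwitz_eigenvalue_complex_mat_of[OF assms]] by blast
  let ?B = "Finite_Cartesian_Product.mat 1 + h *\<^sub>R M"
  obtain r c where r: "0 < r" "r < 1"
    and bound: "\<And>k i j. i < CARD('n) \<Longrightarrow> j < CARD('n) \<Longrightarrow>
                  cmod ((complex_mat_of ?B ^\<^sub>m k) $$ (i, j)) \<le> c * r ^ k"
    using spectral_radius_less_1_power_decay[OF complex_mat_of_carrier zero_less_card_finite
        sr[folded complex_mat_of_Euler_step]] by blast
  have "\<bar>matpow ?B k $ a $ b\<bar> \<le> c * r ^ k" for k a b
    using bound[of "to_nat_on UNIV a" "to_nat_on UNIV b" k]
    unfolding complex_mat_of_matpow[symmetric] by (simp add: complex_mat_of_def)
  with h r show ?thesis by blast
qed

subsection \<open>Discrete Lyapunov sums\<close>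

lemma norm_matrix_le_sum_abs: "norm (X :: real^'n^'m) \<le> (\<Sum>a\<in>UNIV. \<Sum>b\<in>UNIV. \<bar>X $ a $ b\<bar>)"
proof -
  have "norm X \<le> (\<Sum>a\<in>UNIV. norm (X $ a))"
    unfolding norm_vec_def by (rule L2_set_le_sum) simp
  also have "\<dots> \<le> (\<Sum>a\<in>UNIV. \<Sum>b\<in>UNIV. \<bar>X $ a $ b\<bar>)"
    by (intro sum_mono norm_le_l1_cart)
  finally show ?thesis .
qed

lemma bounded_linear_inner_matrix_vector: "bounded_linear (\<lambda>A :: real^'n^'m. u \<bullet> (A *v v))"
proof -
  have "linear (\<lambda>A :: real^'n^'m. u \<bullet> (A *v v))"
    by (rule linearI)
      (simp_all add: matrix_vector_mult_add_rdistrib inner_add_right scaleR_matrix_vector_assoc[symmetric])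
  thus ?thesis by (simp add: linear_conv_bounded_linear)
qed

lemma inner_transpose_mult_matrix_vector:
  fixes Y :: "real^'n^'m"
  shows "u \<bullet> ((Finite_Cartesian_Product.transpose Y ** Y) *v v) = (Y *v u) \<bullet> (Y *v v)"
proof -
  have "(Finite_Cartesian_Product.transpose Y ** Y) *v v = (Y *v v) v* Y"
    unfolding matrix_vector_mul_assoc[symmetric] by (rule Finite_Cartesian_Product.transpose_matrix_vector)
  hence "u \<bullet> ((Finite_Cartesian_Product.transpose Y ** Y) *v v) = ((Y *v v) v* Y) \<bullet> u"
    by (simp add: inner_commute)
  also have "\<dots> = (Y *v v) \<bullet> (Y *v u)" by (rule dot_lmul_matrix)
  finally show ?thesis by (simp add: inner_commute)
qed

lemma quadratic_form_bounded:
  fixes P :: "real^'n^'n"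
  shows "\<exists>K\<ge>1. \<forall>x. x \<bullet> (P *v x) \<le> K * (norm x)\<^sup>2"
proof -
  obtain K where K: "K > 0" "\<And>x. norm (P *v x) \<le> norm x * K"
    using bounded_linear.pos_bounded[OF matrix_vector_mul_bounded_linear[of P]] by blast
  have "x \<bullet> (P *v x) \<le> max 1 K * (norm x)\<^sup>2" for x
  proof -
    have "x \<bullet> (P *v x) \<le> norm x * norm (P *v x)" by (rule norm_cauchy_schwarz)
    also have "\<dots> \<le> norm x * (norm x * max 1 K)"
      by (meson K(2) max.cobounded2 mult_left_mono norm_ge_zero order_trans)
    finally show ?thesis by (simp add: power2_eq_square mult_ac)
  qed
  thus ?thesis by (intro exI[of _ "max 1 K"]) auto
qed

definition lyapunov_sum :: "real^'n^'n \<Rightarrow> real^'n^'n" where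
  "lyapunov_sum B = (\<Sum>k. Finite_Cartesian_Product.transpose (matpow B k) ** matpow B k)"

lemma lyapunov_sum_inner:
  fixes B :: "real^'n^'n"
  assumes decay: "\<And>k a b. \<bar>matpow B k $ a $ b\<bar> \<le> c * r ^ k" and r: "0 \<le> r" "r < 1"
  shows "summable (\<lambda>k. (matpow B k *v u) \<bullet> (matpow B k *v v))"
    and "u \<bullet> (lyapunov_sum B *v v) = (\<Sum>k. (matpow B k *v u) \<bullet> (matpow B k *v v))"
proof -
  define T where "T k = Finite_Cartesian_Product.transpose (matpow B k) ** matpow B k" for k
  let ?N = "real CARD('n)"
  have "c \<ge> 0" using decay[of 0] abs_ge_zero[of "matpow B 0 $ _ $ _"] by force
  have entry: "\<bar>T k $ a $ b\<bar> \<le> ?N * c\<^sup>2 * (r\<^sup>2) ^ k" for k a b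
  proof -
    have "\<bar>T k $ a $ b\<bar> \<le> (\<Sum>l\<in>UNIV. \<bar>matpow B k $ l $ a\<bar> * \<bar>matpow B k $ l $ b\<bar>)"
      unfolding T_def matrix_matrix_mult_def transpose_def
      by (simp add: sum_abs[THEN order_trans] abs_mult)
    also have "\<dots> \<le> (\<Sum>l\<in>(UNIV::'n set). (c * r ^ k) * (c * r ^ k))"
      using decay \<open>c \<ge> 0\<close> r by (intro sum_mono mult_mono) auto
    also have "\<dots> = ?N * c\<^sup>2 * (r\<^sup>2) ^ k"
      by (simp add: power2_eq_square power_mult_distrib power_mult[symmetric] mult_ac)
    finally show ?thesis .
  qed
  have "summable T"
  proof (rule summable_comparison_test')
    show "summable (\<lambda>k. ?N * ?N * (?N * c\<^sup>2) * (r\<^sup>2) ^ k)"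
      using r by (intro summable_mult summable_geometric) (simp add: power_less_one_iff)
    fix k
    have "norm (T k) \<le> (\<Sum>a\<in>(UNIV::'n set). \<Sum>b\<in>(UNIV::'n set). ?N * c\<^sup>2 * (r\<^sup>2) ^ k)"
      using norm_matrix_le_sum_abs[of "T k"] entry by (meson order_trans sum_mono)
    thus "norm (T k) \<le> ?N * ?N * (?N * c\<^sup>2) * (r\<^sup>2) ^ k" by (simp add: mult.assoc)
  qed
  from bounded_linear.summable[OF bounded_linear_inner_matrix_vector this]
    bounded_linear.suminf[OF bounded_linear_inner_matrix_vector this]
  show "summable (\<lambda>k. (matpow B k *v u) \<bullet> (matpow B k *v v))"
    and "u \<bullet> (lyapunov_sum B *v v) = (\<Sum>k. (matpow B k *v u) \<bullet> (matpow B k *v v))"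
    unfolding lyapunov_sum_def T_def inner_transpose_mult_matrix_vector by auto
qed

text \<open>
  Expanding the Stein identity \<open>V (x + h M x) = V x - \<parallel>x\<parallel>\<^sup>2\<close> gives
  \<open>2 h x \<bullet> (P *v (M *v x)) = - \<parallel>x\<parallel>\<^sup>2 - h\<^sup>2 V (M *v x) \<le> - V x / K\<close>.
\<close>

lemma Stein_imp_Lyapunov_decrease:
  fixes M P :: "real^'n^'n"
  assumes sym: "\<And>u v. u \<bullet> (P *v v) = v \<bullet> (P *v u)"
    and Stein: "\<And>x. (B *v x) \<bullet> (P *v (B *v x)) = x \<bullet> (P *v x) - (norm x)\<^sup>2"
    and B: "B = Finite_Cartesian_Product.mat 1 + h *\<^sub>R M" and h: "h > 0"
    and nonneg: "\<And>x. 0 \<le> x \<bullet> (P *v x)"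
    and upper: "\<And>x. x \<bullet> (P *v x) \<le> K * (norm x)\<^sup>2" and K: "K > 0"
  shows "2 * (x \<bullet> (P *v (M *v x))) \<le> - (1 / (h * K)) * (x \<bullet> (P *v x))"
proof -
  let ?m = "M *v x"
  have "B *v x = x + h *\<^sub>R ?m"
    by (simp add: B matrix_vector_mult_add_rdistrib scaleR_matrix_vector_assoc[symmetric])
  hence "(B *v x) \<bullet> (P *v (B *v x))
      = x \<bullet> (P *v x) + 2 * h * (x \<bullet> (P *v ?m)) + h\<^sup>2 * (?m \<bullet> (P *v ?m))"
    using sym[of ?m x]
    by (simp add: matrix_vector_right_distrib matrix_vector_mult_scaleR inner_add_left
        inner_add_right power2_eq_square algebra_simps)
  hence "h * (2 * (x \<bullet> (P *v ?m))) \<le> - (norm x)\<^sup>2"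
    using Stein[of x] mult_nonneg_nonneg[OF zero_le_power2[of h] nonneg[of ?m]] by linarith
  also have "\<dots> \<le> h * (- (1 / (h * K)) * (x \<bullet> (P *v x)))"
    using upper[of x] h K by (simp add: field_simps)
  finally show ?thesis using mult_le_cancel_left_pos[OF h] by blast
qed

definition quadratic_lyapunov :: "real^'n^'n \<Rightarrow> real^'n^'n \<Rightarrow> real \<Rightarrow> real \<Rightarrow> bool" where
  "quadratic_lyapunov M P K \<beta> \<longleftrightarrow> K \<ge> 1 \<and> \<beta> > 0 \<and> (\<forall>u v. u \<bullet> (P *v v) = v \<bullet> (P *v u)) \<and>
     (\<forall>x. (norm x)\<^sup>2 \<le> x \<bullet> (P *v x) \<and> x \<bullet> (P *v x) \<le> K * (norm x)\<^sup>2) \<and>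
     (\<forall>x. 2 * (x \<bullet> (P *v (M *v x))) \<le> - \<beta> * (x \<bullet> (P *v x)))"

lemma hurwitz_imp_quadratic_lyapunov:
  fixes M :: "real^'n^'n"
  assumes "hurwitz M"
  shows "\<exists>P K \<beta>. quadratic_lyapunov M P K \<beta>"
proof -
  obtain h r c where h: "h > 0" and r: "0 < r" "r < 1"
    and decay: "\<And>k a b. \<bar>matpow (Finite_Cartesian_Product.mat 1 + h *\<^sub>R M) k $ a $ b\<bar> \<le> c * r ^ k"
    using hurwitz_Euler_step_power_decay[OF assms] by blast
  define B where "B = Finite_Cartesian_Product.mat 1 + h *\<^sub>R M"
  define P where "P = lyapunov_sum B"
  note sum = lyapunov_sum_inner[OF decay[folded B_def] less_imp_le[OF r(1)] r(2), folded P_def]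
  have sym: "u \<bullet> (P *v v) = v \<bullet> (P *v u)" for u v
    unfolding sum(2) by (simp add: inner_commute)
  have split: "x \<bullet> (P *v x) = (norm x)\<^sup>2 + (\<Sum>k. (matpow B (Suc k) *v x) \<bullet> (matpow B (Suc k) *v x))" for x
    using suminf_split_head[OF sum(1)[of x x]] unfolding sum(2)
    by (simp add: power2_norm_eq_inner)
  have "0 \<le> (\<Sum>k. (matpow B (Suc k) *v x) \<bullet> (matpow B (Suc k) *v x))" for x
    using sum(1)[of x x]
    by (intro suminf_nonneg summable_Suc_iff[THEN iffD2]) (simp_all del: matpow.simps)
  hence lower: "(norm x)\<^sup>2 \<le> x \<bullet> (P *v x)" for x
    using split[of x] by simp
  have nonneg: "0 \<le> x \<bullet> (P *v x)" for x
    using lower[of x] by (meson order_trans zero_le_power2)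
  have Stein: "(B *v x) \<bullet> (P *v (B *v x)) = x \<bullet> (P *v x) - (norm x)\<^sup>2" for x
    using split[of x] unfolding sum(2) by (simp add: matrix_vector_mul_assoc)
  obtain K where K: "K \<ge> 1" "\<And>x. x \<bullet> (P *v x) \<le> K * (norm x)\<^sup>2"
    using quadratic_form_bounded by blast
  have "2 * (x \<bullet> (P *v (M *v x))) \<le> - (1 / (h * K)) * (x \<bullet> (P *v x))" for x
    using Stein_imp_Lyapunov_decrease[OF sym Stein B_def h nonneg K(2)] K(1) by simp
  hence "quadratic_lyapunov M P K (1 / (h * K))"
    unfolding quadratic_lyapunov_def using K h sym lower by auto
  thus ?thesis by blast
qed

lemma quadratic_lyapunov_mono:
  assumes "quadratic_lyapunov M P K \<beta>" "K \<le> K'" "0 < \<beta>'" "\<beta>' \<le> \<beta>"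
  shows "quadratic_lyapunov M P K' \<beta>'"
proof -
  have "- \<beta> * (x \<bullet> (P *v x)) \<le> - \<beta>' * (x \<bullet> (P *v x))" for x
    using assms order_trans[OF zero_le_power2[of "norm x"]] unfolding quadratic_lyapunov_def
    by (intro mult_right_mono) auto
  moreover have "K * (norm x)\<^sup>2 \<le> K' * (norm x)\<^sup>2" for x
    using assms(2) by (intro mult_right_mono) auto
  ultimately show ?thesis
    using assms unfolding quadratic_lyapunov_def by (meson order_trans)
qed

lemma common_quadratic_lyapunov:
  assumes "finite I" "\<forall>i\<in>I. hurwitz (M i)"
  shows "\<exists>P K \<beta>. K \<ge> 1 \<and> \<beta> > 0 \<and> (\<forall>i\<in>I. quadratic_lyapunov (M i) (P i) K \<beta>)"
proof -
  have "\<forall>i\<in>I. \<exists>P K \<beta>. quadratic_lyapunov (M i) P K \<beta>"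
    using hurwitz_imp_quadratic_lyapunov assms(2) by blast
  then obtain P K \<beta> where L: "\<forall>i\<in>I. quadratic_lyapunov (M i) (P i) (K i) (\<beta> i)"
    by metis
  define K' where "K' = Max (insert 1 (K ` I))"
  define \<beta>' where "\<beta>' = Min (insert 1 (\<beta> ` I))"
  have "\<forall>i\<in>I. \<beta> i > 0"
    using L unfolding quadratic_lyapunov_def by blast
  hence "\<beta>' > 0"
    unfolding \<beta>'_def using assms(1) by (subst Min_gr_iff) auto
  moreover have "quadratic_lyapunov (M i) (P i) K' \<beta>'" if "i \<in> I" for i
  proof (rule quadratic_lyapunov_mono[OF L[rule_format, OF that]])
    show "K i \<le> K'" "\<beta>' \<le> \<beta> i"
      unfolding K'_def \<beta>'_def using that assms(1) by auto
  qed fact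
  moreover have "K' \<ge> 1" unfolding K'_def using assms(1) by simp
  ultimately show ?thesis by blast
qed

subsection \<open>Solutions between and across switching times\<close>

lemma has_real_derivative_quadratic_form:
  fixes P :: "real^'n^'n"
  assumes sym: "\<And>u v. u \<bullet> (P *v v) = v \<bullet> (P *v u)"
    and dx: "(x has_vector_derivative d) (at \<tau>)"
  shows "((\<lambda>\<tau>. x \<tau> \<bullet> (P *v x \<tau>)) has_real_derivative 2 * (x \<tau> \<bullet> (P *v d))) (at \<tau>)"
proof -
  have dx': "(x has_derivative (\<lambda>h. h *\<^sub>R d)) (at \<tau>)"
    using dx by (simp add: has_vector_derivative_def)
  have "((\<lambda>\<tau>. x \<tau> \<bullet> (P *v x \<tau>)) has_derivative
          (\<lambda>h. x \<tau> \<bullet> (P *v (h *\<^sub>R d)) + (h *\<^sub>R d) \<bullet> (P *v x \<tau>))) (at \<tau>)"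
    by (intro has_derivative_inner dx' bounded_linear.has_derivative[OF matrix_vector_mul_bounded_linear])
  moreover have "(\<lambda>h. x \<tau> \<bullet> (P *v (h *\<^sub>R d)) + (h *\<^sub>R d) \<bullet> (P *v x \<tau>)) = (\<lambda>h. 2 * (x \<tau> \<bullet> (P *v d)) * h)"
    using sym[of d "x \<tau>"] by (simp add: matrix_vector_mult_scaleR algebra_simps)
  ultimately show ?thesis by (simp add: has_field_derivative_def)
qed

lemma lyapunov_exponential_decay:
  fixes M P :: "real^'n^'n" and x :: "real \<Rightarrow> real^'n"
  assumes sym: "\<And>u v. u \<bullet> (P *v v) = v \<bullet> (P *v u)"
    and decrease: "\<And>y. 2 * (y \<bullet> (P *v (M *v y))) \<le> - \<beta> * (y \<bullet> (P *v y))"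
    and g: "g \<ge> 0" and st: "s \<le> t" and cont: "continuous_on {s..t} x"
    and der: "\<And>\<tau>. s < \<tau> \<Longrightarrow> \<tau> < t \<Longrightarrow> (x has_vector_derivative (g *\<^sub>R (M *v x \<tau>))) (at \<tau>)"
  shows "x t \<bullet> (P *v x t) \<le> exp (- (g * \<beta>) * (t - s)) * (x s \<bullet> (P *v x s))"
proof -
  define V where "V \<tau> = x \<tau> \<bullet> (P *v x \<tau>)" for \<tau>
  define W where "W \<tau> = exp (g * \<beta> * \<tau>) * V \<tau>" for \<tau>
  have "W t \<le> W s"
  proof (rule DERIV_nonpos_imp_decreasing_open[OF st])
    fix \<tau> assume \<tau>: "s < \<tau>" "\<tau> < t"
    let ?dV = "2 * (x \<tau> \<bullet> (P *v (g *\<^sub>R (M *v x \<tau>))))"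
    have "(V has_real_derivative ?dV) (at \<tau>)"
      unfolding V_def by (rule has_real_derivative_quadratic_form[OF sym der[OF \<tau>]])
    hence "(W has_real_derivative exp (g * \<beta> * \<tau>) * (g * \<beta> * V \<tau> + ?dV)) (at \<tau>)"
      unfolding W_def by (auto intro!: derivative_eq_intros simp: algebra_simps)
    moreover have "?dV = g * (2 * (x \<tau> \<bullet> (P *v (M *v x \<tau>))))"
      by (simp add: matrix_vector_mult_scaleR)
    hence "g * \<beta> * V \<tau> + ?dV \<le> 0"
      using mult_left_mono[OF decrease[of "x \<tau>"] g] unfolding V_def by (simp add: algebra_simps)
    ultimately show "\<exists>y. (W has_real_derivative y) (at \<tau>) \<and> y \<le> 0"
      by (meson exp_gt_zero less_imp_le mult_nonneg_nonpos)
  next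
    show "continuous_on {s..t} W"
      unfolding W_def V_def
      by (intro continuous_intros cont bounded_linear.continuous_on[OF matrix_vector_mul_bounded_linear])
  qed
  moreover have "exp (g * \<beta> * s) = exp (g * \<beta> * t) * exp (- (g * \<beta>) * (t - s))"
    by (simp add: exp_add[symmetric] algebra_simps)
  ultimately have "exp (g * \<beta> * t) * V t \<le> exp (g * \<beta> * t) * (exp (- (g * \<beta>) * (t - s)) * V s)"
    unfolding W_def by (simp add: mult.assoc)
  thus ?thesis unfolding V_def by simp
qed

lemma quadratic_lyapunov_solution_bound:
  fixes M P :: "real^'n^'n" and x :: "real \<Rightarrow> real^'n"
  assumes L: "quadratic_lyapunov M P K \<beta>" and g: "g \<ge> 0" and st: "s \<le> t"
    and cont: "continuous_on {s..t} x"
    and der: "\<And>\<tau>. s < \<tau> \<Longrightarrow> \<tau> < t \<Longrightarrow> (x has_vector_derivative (g *\<^sub>R (M *v x \<tau>))) (at \<tau>)"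
  shows "(norm (x t))\<^sup>2 \<le> K * exp (- (g * \<beta>) * (t - s)) * (norm (x s))\<^sup>2"
proof -
  have "(norm (x t))\<^sup>2 \<le> x t \<bullet> (P *v x t)"
    using L unfolding quadratic_lyapunov_def by blast
  also have "\<dots> \<le> exp (- (g * \<beta>) * (t - s)) * (x s \<bullet> (P *v x s))"
    using L g st cont der unfolding quadratic_lyapunov_def by (intro lyapunov_exponential_decay) auto
  also have "\<dots> \<le> exp (- (g * \<beta>) * (t - s)) * (K * (norm (x s))\<^sup>2)"
    using L unfolding quadratic_lyapunov_def by (intro mult_left_mono) auto
  finally show ?thesis by (simp add: algebra_simps)
qed

text \<open>\<open>\<sigma>\<close> is continuous on the interval and takes values in the discrete space \<open>nat\<close>.\<close>

lemma switching_signal_constant: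
  assumes s: "0 \<le> s" and no_switch: "disc_points \<sigma> \<inter> {s<..<t} = {}"
  shows "\<exists>i. \<forall>\<tau>\<in>{s<..<t}. \<sigma> \<tau> = i"
proof -
  define f where "f \<tau> = real (\<sigma> \<tau>)" for \<tau>
  have "continuous (at \<tau>) f" if "\<tau> \<in> {s<..<t}" for \<tau>
  proof -
    have "\<tau> \<notin> disc_points \<sigma>" "\<tau> > 0"
      using no_switch that s by auto
    hence "continuous (at \<tau>) \<sigma>"
      unfolding disc_points_def by simp
    thus ?thesis
      unfolding f_def using continuous_at_compose[OF _ continuous_discrete, of \<tau> \<sigma> real]
      by (simp add: o_def)
  qed
  hence "f constant_on {s<..<t}"
  proof (intro continuous_discrete_range_constant continuous_at_imp_continuous_on)
    fix x assume "x \<in> {s<..<t}"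
    show "\<exists>e>0. \<forall>y. y \<in> {s<..<t} \<and> f y \<noteq> f x \<longrightarrow> e \<le> norm (f y - f x)"
    proof (intro exI[of _ 1] conjI allI impI)
      fix y assume "y \<in> {s<..<t} \<and> f y \<noteq> f x"
      thus "1 \<le> norm (f y - f x)" unfolding f_def by (cases "\<sigma> y < \<sigma> x") auto
    qed simp
  qed auto
  then obtain c where "\<forall>\<tau>\<in>{s<..<t}. real (\<sigma> \<tau>) = c"
    unfolding constant_on_def f_def by auto
  hence "\<forall>\<tau>\<in>{s<..<t}. \<sigma> \<tau> = nat \<lfloor>c\<rfloor>"
    by (metis floor_of_nat nat_int)
  thus ?thesis by blast
qed

lemma switched_solution_bound_between_switches:
  assumes sw: "switching_signal I \<sigma>" and sol: "switched_solution g M \<sigma> x" and g: "g \<ge> 0"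
    and L: "\<forall>i\<in>I. quadratic_lyapunov (M i) (P i) K \<beta>"
    and st: "0 \<le> s" "s < t" and no_switch: "disc_points \<sigma> \<inter> {s<..<t} = {}"
  shows "(norm (x t))\<^sup>2 \<le> K * exp (- (g * \<beta>) * (t - s)) * (norm (x s))\<^sup>2"
proof -
  obtain i where i: "\<forall>\<tau>\<in>{s<..<t}. \<sigma> \<tau> = i"
    using switching_signal_constant[OF st(1) no_switch] by blast
  have "\<sigma> ((s + t) / 2) \<in> I"
    using sw st unfolding switching_signal_def by auto
  hence "i \<in> I" using i st by auto
  show ?thesis
  proof (rule quadratic_lyapunov_solution_bound[OF L[rule_format, OF \<open>i \<in> I\<close>] g])
    show "continuous_on {s..t} x"
      using sol st unfolding switched_solution_def by (auto elim: continuous_on_subset)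
    fix \<tau> assume \<tau>: "s < \<tau>" "\<tau> < t"
    hence "\<tau> \<notin> disc_points \<sigma>" "\<sigma> \<tau> = i"
      using no_switch i by auto
    hence "(x has_vector_derivative (g *\<^sub>R (M i *v x \<tau>))) (at \<tau> within {0..})"
      using sol \<tau> st unfolding switched_solution_def by auto
    hence "(x has_vector_derivative (g *\<^sub>R (M i *v x \<tau>))) (at \<tau> within {0<..})"
      by (rule has_vector_derivative_within_subset) auto
    thus "(x has_vector_derivative (g *\<^sub>R (M i *v x \<tau>))) (at \<tau>)"
      using \<tau> st by (subst (asm) has_vector_derivative_within_open) auto
  qed (use st in simp)
qed

text \<open>
  Induction on the number of switches in \<open>(s, t)\<close>: split at the first switch \<open>d\<close>, use the
  one-segment bound on \<open>[s, d]\<close> and the induction hypothesis on \<open>[d, t]\<close>.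
\<close>

lemma bound_across_switches:
  fixes f :: "real \<Rightarrow> real" and D :: "real set"
  assumes K: "K \<ge> 1" and fin: "\<And>T. finite (D \<inter> {0..T})" and nonneg: "\<And>t. 0 \<le> f t"
    and step: "\<And>s t. 0 \<le> s \<Longrightarrow> s < t \<Longrightarrow> D \<inter> {s<..<t} = {} \<Longrightarrow>
                 f t \<le> K * exp (- \<gamma> * (t - s)) * f s"
    and st: "0 \<le> s" "s \<le> t"
  shows "f t \<le> K ^ (card (D \<inter> {s<..<t}) + 1) * exp (- \<gamma> * (t - s)) * f s"
  using st
proof (induction "card (D \<inter> {s<..<t})" arbitrary: s)
  case 0
  have "finite (D \<inter> {s<..<t})"
    by (rule finite_subset[OF _ fin[of t]]) (use "0.prems" in auto)
  show ?case
  proof (cases "s = t")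
    case True
    thus ?thesis using K nonneg[of t] by (simp add: mult_le_cancel_right1)
  next
    case False
    thus ?thesis using 0 \<open>finite (D \<inter> {s<..<t})\<close> step[of s t] by simp
  qed
next
  case (Suc n)
  define E where "E = D \<inter> {s<..<t}"
  have E: "finite E" "E \<noteq> {}"
    using Suc.hyps(2) card_gt_0_iff[of E] unfolding E_def by simp_all
  define d where "d = Min E"
  have "d \<in> E" and min: "\<And>e. e \<in> E \<Longrightarrow> d \<le> e"
    unfolding d_def using E by simp_all
  hence d: "s < d" "d < t" "d \<in> D" unfolding E_def by auto
  have "D \<inter> {s<..<d} = {}"
    using min d unfolding E_def by (fastforce simp: not_less[symmetric])
  hence first: "f d \<le> K * exp (- \<gamma> * (d - s)) * f s"
    using step Suc.prems d by simp
  have "D \<inter> {d<..<t} = E - {d}"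
    using min d unfolding E_def by fastforce
  hence card_rest: "card (D \<inter> {d<..<t}) = n"
    using Suc.hyps(2) E \<open>d \<in> E\<close> unfolding E_def by simp
  have "f t \<le> K ^ (n + 1) * exp (- \<gamma> * (t - d)) * f d"
    using Suc.hyps(1)[OF card_rest[symmetric]] Suc.prems d unfolding card_rest by simp
  also have "\<dots> \<le> K ^ (n + 1) * exp (- \<gamma> * (t - d)) * (K * exp (- \<gamma> * (d - s)) * f s)"
    using K by (intro mult_left_mono[OF first]) simp
  also have "exp (- \<gamma> * (t - d)) * exp (- \<gamma> * (d - s)) = exp (- \<gamma> * (t - s))"
    by (simp add: exp_add[symmetric] algebra_simps)
  hence "K ^ (n + 1) * exp (- \<gamma> * (t - d)) * (K * exp (- \<gamma> * (d - s)) * f s)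
      = K ^ (Suc n + 1) * exp (- \<gamma> * (t - s)) * f s"
    by (simp add: ac_simps)
  finally show ?case unfolding Suc.hyps(2) .
qed

lemma switched_solution_norm_bound:
  assumes sw: "switching_signal I \<sigma>" and sol: "switched_solution g M \<sigma> x" and g: "g \<ge> 0"
    and L: "\<forall>i\<in>I. quadratic_lyapunov (M i) (P i) K \<beta>" and K: "K \<ge> 1" and t: "t \<ge> 0"
  shows "(norm (x t))\<^sup>2 \<le> K ^ (N_sigma \<sigma> 0 t + 1) * exp (- (g * \<beta>) * t) * (norm (x 0))\<^sup>2"
proof -
  have "(norm (x t))\<^sup>2
      \<le> K ^ (card (disc_points \<sigma> \<inter> {0<..<t}) + 1) * exp (- (g * \<beta>) * (t - 0)) * (norm (x 0))\<^sup>2"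
  proof (rule bound_across_switches[OF K])
    show "finite (disc_points \<sigma> \<inter> {0..T})" for T
      using sw unfolding switching_signal_def by blast
    show "(norm (x t'))\<^sup>2 \<le> K * exp (- (g * \<beta>) * (t' - s)) * (norm (x s))\<^sup>2"
      if "0 \<le> s" "s < t'" "disc_points \<sigma> \<inter> {s<..<t'} = {}" for s t'
      using switched_solution_bound_between_switches[OF sw sol g L that] .
  qed (use t in auto)
  thus ?thesis unfolding N_sigma_def by simp
qed

lemma average_dwell_time_estimate:
  fixes K tauD N0 lam \<gamma> t :: real
  assumes K: "K \<ge> 1" and tauD: "tauD > 0" and t: "t \<ge> 0"
    and N: "real N \<le> N0 + t / tauD" and gain: "2 * lam + ln K / tauD \<le> \<gamma>"
  shows "K ^ (N + 1) * exp (- \<gamma> * t) \<le> (exp (ln K * (N0 + 1) / 2) * exp (- lam * t))\<^sup>2"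
proof -
  have "K ^ (N + 1) = exp (ln K) ^ (N + 1)"
    using K by simp
  also have "\<dots> = exp (ln K * real (N + 1))"
    by (metis exp_of_nat_mult mult.commute)
  also have "\<dots> \<le> exp (ln K * (N0 + 1 + t / tauD))"
    using N K by (intro exp_mono mult_left_mono) auto
  finally have "K ^ (N + 1) * exp (- \<gamma> * t) \<le> exp (ln K * (N0 + 1) + (ln K / tauD - \<gamma>) * t)"
    by (rule order_trans[OF mult_right_mono]) (simp_all add: mult_exp_exp algebra_simps)
  also have "\<dots> \<le> exp (ln K * (N0 + 1) - 2 * lam * t)"
    using gain t by (intro exp_mono) (auto intro: mult_right_mono[of _ "- 2 * lam", simplified])
  also have "\<dots> = (exp (ln K * (N0 + 1) / 2) * exp (- lam * t))\<^sup>2"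
    by (simp add: power2_eq_square mult_exp_exp algebra_simps)
  finally show ?thesis .
qed

lemma switched_solution_exponential_decay:
  assumes L: "\<forall>i\<in>I. quadratic_lyapunov (M i) (P i) K \<beta>" and K: "K \<ge> 1" and tauD: "tauD > 0"
    and \<sigma>: "\<sigma> \<in> S_ave I tauD N0" and sol: "switched_solution g M \<sigma> x"
    and g: "g \<ge> 0" and gain: "2 * lam + ln K / tauD \<le> g * \<beta>" and t: "t \<ge> 0"
  shows "norm (x t) \<le> exp (ln K * (N0 + 1) / 2) * exp (- lam * t) * norm (x 0)"
proof -
  have sw: "switching_signal I \<sigma>"
    and ave: "\<forall>t0 t. 0 \<le> t0 \<and> t0 \<le> t \<longrightarrow> real (N_sigma \<sigma> t0 t) \<le> N0 + (t - t0) / tauD"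
    using \<sigma> unfolding S_ave_def by auto
  have "(norm (x t))\<^sup>2 \<le> K ^ (N_sigma \<sigma> 0 t + 1) * exp (- (g * \<beta>) * t) * (norm (x 0))\<^sup>2"
    by (rule switched_solution_norm_bound[OF sw sol g L K t])
  also have "\<dots> \<le> (exp (ln K * (N0 + 1) / 2) * exp (- lam * t))\<^sup>2 * (norm (x 0))\<^sup>2"
    using ave[rule_format, of 0 t] t
    by (intro mult_right_mono average_dwell_time_estimate[OF K tauD t _ gain]) simp_all
  finally have "(norm (x t))\<^sup>2 \<le> (exp (ln K * (N0 + 1) / 2) * exp (- lam * t) * norm (x 0))\<^sup>2"
    by (simp add: power_mult_distrib)
  thus ?thesis by (rule power2_le_imp_le) simp
qed

theorem lemma3:
  fixes M :: "nat \<Rightarrow> real^'n^'n" and p :: nat and tauD N0 lam :: real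
  assumes "\<forall>i\<in>{1..p}. hurwitz (M i)"
    and "tauD > 0" and "N0 > 0" and "lam > 0"
  shows "\<exists>g0>0. \<forall>g\<ge>g0. \<exists>c>0. \<forall>\<sigma> x.
           \<sigma> \<in> S_ave {1..p} tauD N0 \<and> switched_solution g M \<sigma> x \<longrightarrow>
           (\<forall>t\<ge>0. norm (x t) \<le> c * exp (- lam * t) * norm (x 0))"
proof -
  obtain P K \<beta> where K: "K \<ge> 1" and \<beta>: "\<beta> > 0"
    and L: "\<forall>i\<in>{1..p}. quadratic_lyapunov (M i) (P i) K \<beta>"
    using common_quadratic_lyapunov[OF _ assms(1)] by auto
  define g0 where "g0 = (2 * lam + ln K / tauD) / \<beta>"
  have "g0 > 0" unfolding g0_def using K \<beta> assms(2,4) by (intro divide_pos_pos add_pos_nonneg) auto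
  show ?thesis
  proof (rule exI[of _ g0], intro conjI allI impI exI[of _ "exp (ln K * (N0 + 1) / 2)"])
    fix g \<sigma> x and t :: real
    assume "g0 \<le> g" "\<sigma> \<in> S_ave {1..p} tauD N0 \<and> switched_solution g M \<sigma> x" "0 \<le> t"
    moreover have "2 * lam + ln K / tauD \<le> g * \<beta>"
      using \<open>g0 \<le> g\<close> \<beta> unfolding g0_def by (simp add: field_simps)
    ultimately show "norm (x t) \<le> exp (ln K * (N0 + 1) / 2) * exp (- lam * t) * norm (x 0)"
      using \<open>g0 > 0\<close> by (intro switched_solution_exponential_decay[OF L K assms(2)]) auto
  qed (simp_all add: \<open>g0 > 0\<close>)
qed

end
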